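(* Let $d\le\ell$ be positive integers and $L\ge2$. In an $L$-graph $\mathcal G$ with a $(p,n,d)$-non-backtracking multi-labelling $\mathcal L$, the number of $T_4$ edges is at most $12\,\bar\Delta(\mathcal L)\,\ell$.
   Context: An $L$-graph is a cycle with $2L$ vertices alternating between $n$-vertices and $p$-vertices. A $(p,n,d)$-non-backtracking multi-labelling assigns an $n$-label in $[n]$ to each $n$-vertex and a tuple of $d$ distinct $p$-labels in $[p]$ to each $p$-vertex ($d\le\ell$) such that (i) each $n$-vertex's label differs from those of the $n$-vertices immediately preceding and following it, and each $p$-vertex's tuple differs (up to reordering) from those of the $p$-vertices immediately preceding and following it; (ii) for each $n$-label $i$ and $p$-label $j$ the number of edges with $n$-endpoint labelled $i$ and $p$-endpoint's tuple containing $j$ is even. With $\tilde r,\tilde c$ the numbers of distinct $n$- and $p$-labels, $\bar\Delta(\mathcal L)=1+\frac L2+\frac{dL}{2\ell}-\tilde r-\frac{\tilde c}{\ell}$. Fix a starting $p$-vertex and orientation. For an edge between an $n$-vertex labelled $i$ and a $p$-vertex with tuple $(j_1,\dots,j_d)$, its sub-edges are the pairs $(i,j_k)$ in traversal order; a sub-edge is $t_1$ if the label at its later endpoint has not previously appeared on a vertex of that kind, $t_3$ if the same label pair has occurred exactly once before as a sub-edge and that occurrence was $t_1$, and $t_4$ otherwise. An edge is $T_1$ if all its sub-edges are $t_1$, $T_3$ if all are $t_3$, and $T_4$ otherwise. *)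

theory Defs
  imports Complex_Main
begin

(* An L-graph is traversed starting at p-vertex 0 with a fixed orientation:
   p_0, n_0, p_1, n_1, ..., p_{L-1}, n_{L-1}, (back to p_0).
   A labelling is given by nl k (label of n-vertex n_k, k < L) and
   pl k (tuple of p-labels of p-vertex p_k, k < L).
   Edges are indexed m < 2L: edge 2k joins p_k -> n_k, edge 2k+1 joins n_k -> p_{k+1 mod L}. *)

definition edge_nlab :: "(nat \<Rightarrow> nat) \<Rightarrow> nat \<Rightarrow> nat" where
  "edge_nlab nl m = nl (m div 2)"

definition edge_ptup :: "nat \<Rightarrow> (nat \<Rightarrow> nat list) \<Rightarrow> nat \<Rightarrow> nat list" where
  "edge_ptup L pl m = pl (if even m then m div 2 else Suc (m div 2) mod L)"

definition nb_multi_labelling ::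
  "nat \<Rightarrow> nat \<Rightarrow> nat \<Rightarrow> nat \<Rightarrow> (nat \<Rightarrow> nat) \<Rightarrow> (nat \<Rightarrow> nat list) \<Rightarrow> bool" where
  "nb_multi_labelling p n d L nl pl \<longleftrightarrow>
     (\<forall>k<L. nl k \<in> {1..n}) \<and>
     (\<forall>k<L. length (pl k) = d \<and> distinct (pl k) \<and> set (pl k) \<subseteq> {1..p}) \<and>
     (\<forall>k<L. nl k \<noteq> nl (Suc k mod L)) \<and>
     (\<forall>k<L. set (pl k) \<noteq> set (pl (Suc k mod L))) \<and>
     (\<forall>i j. even (card {m. m < 2 * L \<and> edge_nlab nl m = i \<and> j \<in> set (edge_ptup L pl m)}))"

definition r_tilde :: "nat \<Rightarrow> (nat \<Rightarrow> nat) \<Rightarrow> nat" where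
  "r_tilde L nl = card (nl ` {..<L})"

definition c_tilde :: "nat \<Rightarrow> (nat \<Rightarrow> nat list) \<Rightarrow> nat" where
  "c_tilde L pl = card (\<Union>k<L. set (pl k))"

definition Delta_bar :: "nat \<Rightarrow> nat \<Rightarrow> nat \<Rightarrow> (nat \<Rightarrow> nat) \<Rightarrow> (nat \<Rightarrow> nat list) \<Rightarrow> real" where
  "Delta_bar d l L nl pl =
     1 + real L / 2 + real d * real L / (2 * real l) - real (r_tilde L nl) - real (c_tilde L pl) / real l"

(* Sub-edges in traversal order: (edge index, n-label, p-label). *)
definition subedges :: "nat \<Rightarrow> (nat \<Rightarrow> nat) \<Rightarrow> (nat \<Rightarrow> nat list) \<Rightarrow> (nat \<times> nat \<times> nat) list" where
  "subedges L nl pl =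
     concat (map (\<lambda>m. map (\<lambda>j. (m, edge_nlab nl m, j)) (edge_ptup L pl m)) [0..<2 * L])"

(* Walk positions s = 0..2L: even s is p-vertex p_{(s div 2) mod L}, odd s is n-vertex n_{s div 2}.
   Edge m goes from position m to position m+1 (its later endpoint). A sub-edge is t1 if the
   label at its later endpoint did not appear on an earlier-visited vertex of the same kind. *)
definition is_t1 :: "nat \<Rightarrow> (nat \<Rightarrow> nat) \<Rightarrow> (nat \<Rightarrow> nat list) \<Rightarrow> nat \<times> nat \<times> nat \<Rightarrow> bool" where
  "is_t1 L nl pl se = (case se of (m, i, j) \<Rightarrow>
     (if even m then i \<notin> {nl (s div 2) | s. s < Suc m \<and> odd s}
      else j \<notin> (\<Union>{set (pl ((s div 2) mod L)) | s. s < Suc m \<and> even s})))"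

definition is_t3 :: "nat \<Rightarrow> (nat \<Rightarrow> nat) \<Rightarrow> (nat \<Rightarrow> nat list) \<Rightarrow> nat \<Rightarrow> bool" where
  "is_t3 L nl pl q = (let S = subedges L nl pl;
                          prev = filter (\<lambda>x. snd x = snd (S ! q)) (take q S)
                      in length prev = 1 \<and> is_t1 L nl pl (hd prev))"

definition subedge_positions :: "nat \<Rightarrow> (nat \<Rightarrow> nat) \<Rightarrow> (nat \<Rightarrow> nat list) \<Rightarrow> nat \<Rightarrow> nat set" where
  "subedge_positions L nl pl m = {q. q < length (subedges L nl pl) \<and> fst (subedges L nl pl ! q) = m}"

definition is_T1 :: "nat \<Rightarrow> (nat \<Rightarrow> nat) \<Rightarrow> (nat \<Rightarrow> nat list) \<Rightarrow> nat \<Rightarrow> bool" where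
  "is_T1 L nl pl m \<longleftrightarrow> (\<forall>q\<in>subedge_positions L nl pl m. is_t1 L nl pl (subedges L nl pl ! q))"

definition is_T3 :: "nat \<Rightarrow> (nat \<Rightarrow> nat) \<Rightarrow> (nat \<Rightarrow> nat list) \<Rightarrow> nat \<Rightarrow> bool" where
  "is_T3 L nl pl m \<longleftrightarrow> (\<forall>q\<in>subedge_positions L nl pl m. is_t3 L nl pl q)"

definition is_T4 :: "nat \<Rightarrow> (nat \<Rightarrow> nat) \<Rightarrow> (nat \<Rightarrow> nat list) \<Rightarrow> nat \<Rightarrow> bool" where
  "is_T4 L nl pl m \<longleftrightarrow> \<not> is_T1 L nl pl m \<and> \<not> is_T3 L nl pl m"

definition num_T4 :: "nat \<Rightarrow> (nat \<Rightarrow> nat) \<Rightarrow> (nat \<Rightarrow> nat list) \<Rightarrow> nat" where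
  "num_T4 L nl pl = card {m. m < 2 * L \<and> is_T4 L nl pl m}"

end

theory Submission
  imports Defs
begin

text \<open>Every t1 sub-edge is the first occurrence of its label pair; as each pair occurs an even
  number of times, its second occurrence is t3. Hence there are at most 2Ld - 2 #t1 sub-edges of
  type t4, and #t1 = d r + c - d. A T4 edge either contains a t4 sub-edge or is an edge
  n_k -> p_(k+1) whose tuple mixes new and old p-labels. Such mixed edges are charged injectively
  to edges containing t4 sub-edges, except for k = 0 and for the case that p_k and p_(k+1) share a
  label, which then lies on at least three p-vertices. Parity also forces every label to occur at
  least twice, so 2 r <= L and there are at most 3dL - 6c incidences of labels lying on three or
  more p-vertices.\<close>

lemma sum_lessThan_double:
  "(\<Sum>m<2 * K. f m) = (\<Sum>k<K. f (2 * k) + f (Suc (2 * k)))"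
  by (induction K) (auto simp: add.assoc)

lemma even_odd_cases [case_names even odd]:
  fixes m :: nat
  obtains k where "m = 2 * k" | k where "m = Suc (2 * k)"
  by (metis oddE evenE Suc_eq_plus1)

lemma Suc_mod_eq_if_pos:
  fixes L :: nat
  shows "s < L \<Longrightarrow> Suc s mod L = k \<Longrightarrow> 0 < k \<Longrightarrow> Suc s = k"
  by (cases "Suc s = L") auto

lemma card_image_le_half:
  assumes "finite A" and "\<And>x. x \<in> A \<Longrightarrow> \<exists>y\<in>A. y \<noteq> x \<and> f y = f x"
  shows "2 * card (f ` A) \<le> card A"
proof -
  have "card A = card (\<Union>v\<in>f ` A. {x \<in> A. f x = v})"
    by (rule arg_cong[where f = card]) auto
  also have "\<dots> = (\<Sum>v\<in>f ` A. card {x \<in> A. f x = v})"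
    using assms(1) by (intro card_UN_disjoint) auto
  finally have sum: "card A = (\<Sum>v\<in>f ` A. card {x \<in> A. f x = v})" .
  have "2 \<le> card {x \<in> A. f x = v}" if v: "v \<in> f ` A" for v
  proof -
    obtain x where x: "x \<in> A" "f x = v" using v by blast
    then obtain y where y: "y \<in> A" "y \<noteq> x" "f y = v" using assms(2) by blast
    have "card {x, y} \<le> card {x \<in> A. f x = v}"
      using assms(1) x y by (intro card_mono) auto
    then show ?thesis using y by simp
  qed
  then have "(\<Sum>v\<in>f ` A. 2) \<le> (\<Sum>v\<in>f ` A. card {x \<in> A. f x = v})"
    by (rule sum_mono)
  then show ?thesis using sum by simp
qed

lemma card_heavy_incidences_le:
  fixes K :: "'k set" and B :: "'k \<Rightarrow> 'a set"
  defines "\<mu> j \<equiv> card {k \<in> K. j \<in> B k}"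
  assumes K: "finite K" and B: "\<And>k. k \<in> K \<Longrightarrow> finite (B k)"
    and twice: "\<And>j. j \<in> (\<Union>k\<in>K. B k) \<Longrightarrow> 2 \<le> \<mu> j"
  shows "card {(j, k). k \<in> K \<and> j \<in> B k \<and> 3 \<le> \<mu> j} + 6 * card (\<Union>k\<in>K. B k)
           \<le> 3 * (\<Sum>k\<in>K. card (B k))"
proof -
  let ?U = "\<Union>k\<in>K. B k"
  have U: "finite ?U" using K B by blast
  have "(\<Sum>k\<in>K. card (B k)) = (\<Sum>k\<in>K. card {j \<in> ?U. j \<in> B k})"
    by (intro sum.cong) (auto intro!: arg_cong[where f = card])
  also have "\<dots> = (\<Sum>j\<in>?U. \<mu> j)"
    unfolding \<mu>_def by (rule sum_multicount_gen[OF K U]) simp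
  finally have total: "(\<Sum>k\<in>K. card (B k)) = (\<Sum>j\<in>?U. \<mu> j)" .
  have "{(j, k). k \<in> K \<and> j \<in> B k \<and> 3 \<le> \<mu> j} = (SIGMA j:{j \<in> ?U. 3 \<le> \<mu> j}. {k \<in> K. j \<in> B k})"
    by auto
  then have "card {(j, k). k \<in> K \<and> j \<in> B k \<and> 3 \<le> \<mu> j} = (\<Sum>j | j \<in> ?U \<and> 3 \<le> \<mu> j. \<mu> j)"
    unfolding \<mu>_def using U K by simp
  also have "\<dots> \<le> (\<Sum>j | j \<in> ?U \<and> 3 \<le> \<mu> j. 3 * (\<mu> j - 2))"
    by (rule sum_mono) auto
  also have "\<dots> \<le> (\<Sum>j\<in>?U. 3 * (\<mu> j - 2))"
    using U by (intro sum_mono2) auto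
  finally have heavy: "card {(j, k). k \<in> K \<and> j \<in> B k \<and> 3 \<le> \<mu> j} \<le> 3 * (\<Sum>j\<in>?U. \<mu> j - 2)"
    by (simp add: sum_distrib_left)
  have "(\<Sum>j\<in>?U. \<mu> j) = (\<Sum>j\<in>?U. (\<mu> j - 2) + 2)"
  proof (rule sum.cong)
    fix j assume "j \<in> ?U"
    then show "\<mu> j = \<mu> j - 2 + 2" using twice by fastforce
  qed simp
  also have "\<dots> = (\<Sum>j\<in>?U. \<mu> j - 2) + 2 * card ?U"
    by (simp only: sum.distrib sum_constant) simp
  finally show ?thesis using heavy total by linarith
qed

lemma sorted_map_fst_concat_upt:
  assumes "\<And>m x. x \<in> set (g m) \<Longrightarrow> fst x = m"
  shows "sorted (map fst (concat (map g [0..<K])))"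
proof (induction K)
  case (Suc K)
  have "fst x < K" if "x \<in> set (concat (map g [0..<K]))" for x
    using that by (force dest: assms)
  moreover have "map fst (g K) = replicate (length (g K)) K"
    using assms by (intro replicate_eqI) auto
  then have "sorted (map fst (g K))"
    by (metis sorted_replicate)
  ultimately show ?case
    using Suc assms by (auto simp: sorted_append intro: less_imp_le)
qed simp

lemma card_indices_distinct:
  assumes "distinct xs"
  shows "card {i. i < length xs \<and> P (xs ! i)} = card {x \<in> set xs. P x}"
proof -
  have "card {i. i < length xs \<and> P (xs ! i)} = length (filter P xs)"
    by (simp add: length_filter_conv_card)
  also have "\<dots> = card {x \<in> set xs. P x}"
    using assms by (simp add: distinct_length_filter Int_def conj_commute)
  finally show ?thesis .
qed

lemma filter_take_eq_singleton:
  assumes "k \<le> length xs" and only_q: "{i. i < k \<and> P (xs ! i)} = {q}"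
  shows "filter P (take k xs) = [xs ! q]"
proof -
  have "{i. i < k \<and> P (take k xs ! i)} = {i. i < k \<and> P (xs ! i)}"
    by (rule Collect_cong) auto
  then have "{i. i < k \<and> P (take k xs ! i)} = {q}"
    using only_q by simp
  then have "length (filter P (take k xs)) = 1"
    using assms(1) by (simp add: length_filter_conv_card min_absorb2)
  then obtain y where y: "filter P (take k xs) = [y]"
    by (metis One_nat_def length_0_conv length_Suc_conv)
  then have "y \<in> set (filter P (take k xs))" by simp
  then have "y \<in> set (take k xs)" "P y" by simp_all
  then obtain i where "i < k" "xs ! i = y"
    using assms(1) by (auto simp: in_set_conv_nth)
  then have "i = q" using only_q \<open>P y\<close> by blast
  then show ?thesis using y \<open>xs ! i = y\<close> by simp
qed

text \<open>Each first occurrence of a key is matched with the second occurrence of that key.\<close>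

lemma card_first_occurrences_le:
  fixes xs :: "'a list" and key :: "'a \<Rightarrow> 'b"
  assumes even_counts: "\<And>v. even (length (filter (\<lambda>x. key x = v) xs))"
    and first: "\<And>q. q \<in> A \<Longrightarrow> q < length xs \<and> (\<forall>i<q. key (xs ! i) \<noteq> key (xs ! q))"
  shows "card A \<le> card {q'. q' < length xs \<and>
           (\<exists>q\<in>A. filter (\<lambda>x. key x = key (xs ! q')) (take q' xs) = [xs ! q])}"
proof -
  define second where
    "second q = (LEAST q'. q < q' \<and> q' < length xs \<and> key (xs ! q') = key (xs ! q))" for q
  have second: "q < second q \<and> second q < length xs \<and> key (xs ! second q) = key (xs ! q) \<and>
      {i. i < second q \<and> key (xs ! i) = key (xs ! second q)} = {q}" if q: "q \<in> A" for q
  proof -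
    let ?P = "\<lambda>q'. q < q' \<and> q' < length xs \<and> key (xs ! q') = key (xs ! q)"
    have "\<exists>q'. ?P q'"
    proof (rule ccontr)
      assume "\<nexists>q'. ?P q'"
      then have "{i. i < length xs \<and> key (xs ! i) = key (xs ! q)} = {q}"
        using first[OF q] by (auto simp: not_less_iff_gr_or_eq)
      then show False
        using even_counts[of "key (xs ! q)"] by (simp add: length_filter_conv_card)
    qed
    then have P: "?P (second q)" unfolding second_def by (rule LeastI_ex)
    have "\<not> ?P i" if "i < second q" for i
      using that unfolding second_def by (rule not_less_Least)
    then have "{i. i < second q \<and> key (xs ! i) = key (xs ! second q)} = {q}"
      using first[OF q] P by (auto simp: not_less_iff_gr_or_eq)
    then show ?thesis using P by blast
  qed
  show ?thesis
  proof (rule card_inj_on_le[where f = second])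
    show "inj_on second A"
    proof (rule inj_onI)
      fix a b assume "a \<in> A" "b \<in> A" "second a = second b"
      then have "key (xs ! a) = key (xs ! b)" using second by metis
      then show "a = b" using first \<open>a \<in> A\<close> \<open>b \<in> A\<close> by (metis linorder_neqE_nat)
    qed
    show "second ` A \<subseteq> {q'. q' < length xs \<and>
           (\<exists>q\<in>A. filter (\<lambda>x. key x = key (xs ! q')) (take q' xs) = [xs ! q])}"
      using second by (fastforce intro!: filter_take_eq_singleton)
    show "finite {q'. q' < length xs \<and>
           (\<exists>q\<in>A. filter (\<lambda>x. key x = key (xs ! q')) (take q' xs) = [xs ! q])}"
      by simp
  qed
qed

locale nb_labelling =
  fixes p n d L :: nat and nl :: "nat \<Rightarrow> nat" and pl :: "nat \<Rightarrow> nat list"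
  assumes L_pos: "0 < L" and labelling: "nb_multi_labelling p n d L nl pl"
begin

abbreviation "S \<equiv> subedges L nl pl"
abbreviation "pt \<equiv> edge_ptup L pl"
abbreviation "nlab \<equiv> edge_nlab nl"
abbreviation "t1 \<equiv> is_t1 L nl pl"
abbreviation "t3 \<equiv> is_t3 L nl pl"

lemma length_pl: "k < L \<Longrightarrow> length (pl k) = d"
  and distinct_pl: "k < L \<Longrightarrow> distinct (pl k)"
  and nl_neq_next: "k < L \<Longrightarrow> nl k \<noteq> nl (Suc k mod L)"
  and set_pl_neq_next: "k < L \<Longrightarrow> set (pl k) \<noteq> set (pl (Suc k mod L))"
  and even_card_edges_with_pair: "even (card {m. m < 2 * L \<and> nlab m = i \<and> j \<in> set (pt m)})"
  using labelling unfolding nb_multi_labelling_def by blast+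

lemma d_pos: "0 < d"
proof (rule ccontr)
  assume "\<not> 0 < d"
  then have "pl 0 = []" "pl (Suc 0 mod L) = []"
    using length_pl L_pos by auto
  then show False using set_pl_neq_next[OF L_pos] by simp
qed

lemma edge_ptup_even [simp]: "pt (2 * k) = pl k"
  and edge_ptup_odd [simp]: "pt (Suc (2 * k)) = pl (Suc k mod L)"
  and edge_nlab_even [simp]: "nlab (2 * k) = nl k"
  and edge_nlab_odd [simp]: "nlab (Suc (2 * k)) = nl k"
  by (simp_all add: edge_ptup_def edge_nlab_def)

lemma edge_ptup_pvertex: "m < 2 * L \<Longrightarrow> \<exists>k<L. pt m = pl k"
proof (cases m rule: even_odd_cases)
  case (odd k)
  then show ?thesis using L_pos by (intro exI[of _ "Suc k mod L"]) auto
qed auto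

lemma length_edge_ptup: "m < 2 * L \<Longrightarrow> length (pt m) = d"
  and distinct_edge_ptup: "m < 2 * L \<Longrightarrow> distinct (pt m)"
  using edge_ptup_pvertex length_pl distinct_pl by metis+

lemma other_edge_with_pair:
  assumes "m0 < 2 * L" and "j \<in> set (pt m0)"
  obtains m where "m < 2 * L" "m \<noteq> m0" "nlab m = nlab m0" "j \<in> set (pt m)"
proof -
  let ?E = "{m. m < 2 * L \<and> nlab m = nlab m0 \<and> j \<in> set (pt m)}"
  have "?E \<noteq> {m0}"
  proof
    assume "?E = {m0}"
    then show False using even_card_edges_with_pair[of "nlab m0" j] by simp
  qed
  moreover have "m0 \<in> ?E" using assms by simp
  ultimately show thesis using that by blast
qed

lemma subedges_eq: "S = concat (map (\<lambda>m. map (\<lambda>j. (m, nlab m, j)) (pt m)) [0..<2 * L])"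
  by (simp add: subedges_def)

lemma set_subedges:
  "x \<in> set S \<longleftrightarrow> (\<exists>m j. x = (m, nlab m, j) \<and> m < 2 * L \<and> j \<in> set (pt m))"
  unfolding subedges_eq by auto

lemma distinct_subedges: "distinct S"
proof -
  define f where "f m = map (\<lambda>j. (m, nlab m, j)) (pt m)" for m
  have fst_f: "fst ` set (f m) = {m}" if "m < 2 * L" for m
    using that length_edge_ptup[of m] d_pos unfolding f_def by (auto simp: image_image image_constant_conv)
  have "inj_on f {0..<2 * L}"
    by (rule inj_onI) (metis fst_f atLeastLessThan_iff singleton_inject)
  moreover have "distinct (f m)" if "m < 2 * L" for m
    using distinct_edge_ptup[OF that] unfolding f_def by (simp add: distinct_map inj_on_def)
  moreover have "set (f a) \<inter> set (f b) = {}" if "f a \<noteq> f b" for a b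
    using that unfolding f_def by auto
  ultimately have "distinct (concat (map f [0..<2 * L]))"
    by (intro distinct_concat) (auto simp: distinct_map)
  then show ?thesis unfolding subedges_eq f_def .
qed

lemma length_subedges: "length S = 2 * L * d"
proof -
  have "length S = sum_list (map (\<lambda>m. length (pt m)) [0..<2 * L])"
    unfolding subedges_eq by (simp add: length_concat o_def)
  also have "map (\<lambda>m. length (pt m)) [0..<2 * L] = map (\<lambda>_. d) [0..<2 * L]"
    by (rule map_cong) (auto simp: length_edge_ptup)
  finally show ?thesis by (simp add: sum_list_triv)
qed

lemma sorted_subedge_edges: "sorted (map fst S)"
  unfolding subedges_eq by (rule sorted_map_fst_concat_upt) auto

lemma subedge_nth:
  assumes "q < length S"
  obtains m j where "S ! q = (m, nlab m, j)" "m < 2 * L" "j \<in> set (pt m)"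
proof -
  have "S ! q \<in> set S" using assms by (rule nth_mem)
  then show thesis using that unfolding set_subedges by blast
qed

lemma subedge_index:
  assumes "m < 2 * L" and "j \<in> set (pt m)"
  obtains q where "q < length S" "S ! q = (m, nlab m, j)"
proof -
  have "(m, nlab m, j) \<in> set S" using assms by (auto simp: set_subedges)
  then show thesis using that unfolding in_set_conv_nth by blast
qed

lemma card_subedges_with:
  "card {x \<in> set S. P x} = (\<Sum>m<2 * L. card {j \<in> set (pt m). P (m, nlab m, j)})"
proof -
  have eq: "{x \<in> set S. P x} =
      (\<lambda>(m, j). (m, nlab m, j)) ` (SIGMA m:{..<2 * L}. {j \<in> set (pt m). P (m, nlab m, j)})"
    unfolding set_subedges by auto
  have "card ((\<lambda>(m, j). (m, nlab m, j)) ` (SIGMA m:{..<2 * L}. {j \<in> set (pt m). P (m, nlab m, j)}))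
      = card (SIGMA m:{..<2 * L}. {j \<in> set (pt m). P (m, nlab m, j)})"
    by (rule card_image) (simp add: inj_on_def)
  also have "\<dots> = (\<Sum>m<2 * L. card {j \<in> set (pt m). P (m, nlab m, j)})"
    by (rule card_SigmaI) simp_all
  finally show ?thesis unfolding eq .
qed

lemma even_count_pairs: "even (length (filter (\<lambda>x. snd x = v) S))"
proof -
  obtain i j where v: "v = (i, j)" by (cases v)
  have eq: "{x \<in> set S. snd x = v} = (\<lambda>m. (m, i, j)) ` {m. m < 2 * L \<and> nlab m = i \<and> j \<in> set (pt m)}"
    unfolding v set_subedges by auto
  have "length (filter (\<lambda>x. snd x = v) S) = card {x \<in> set S. snd x = v}"
    using distinct_subedges by (simp add: distinct_length_filter Int_def conj_commute)
  also have "\<dots> = card {m. m < 2 * L \<and> nlab m = i \<and> j \<in> set (pt m)}"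
    unfolding eq by (simp add: card_image inj_on_def)
  finally show ?thesis using even_card_edges_with_pair by simp
qed

definition new_nlabel :: "nat \<Rightarrow> bool" where
  "new_nlabel k \<longleftrightarrow> (\<forall>s<k. nl s \<noteq> nl k)"

definition seen_plabel :: "nat \<Rightarrow> nat \<Rightarrow> bool" where
  "seen_plabel k j \<longleftrightarrow> (\<exists>s\<le>k. j \<in> set (pl s))"

lemma is_t1_even: "t1 (2 * k, i, j) \<longleftrightarrow> (\<forall>s<k. nl s \<noteq> i)"
proof -
  have "{nl (s div 2) | s. s < Suc (2 * k) \<and> odd s} = nl ` {..<k}"
  proof (rule set_eqI, rule iffI)
    fix x assume "x \<in> {nl (s div 2) | s. s < Suc (2 * k) \<and> odd s}"
    then show "x \<in> nl ` {..<k}" by (auto elim!: oddE)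
  next
    fix x assume "x \<in> nl ` {..<k}"
    then obtain t where "t < k" "x = nl t" by auto
    then show "x \<in> {nl (s div 2) | s. s < Suc (2 * k) \<and> odd s}"
      by (intro CollectI exI[of _ "Suc (2 * t)"]) auto
  qed
  then show ?thesis unfolding is_t1_def by auto
qed

lemma is_t1_odd:
  assumes "k < L"
  shows "t1 (Suc (2 * k), i, j) \<longleftrightarrow> \<not> seen_plabel k j"
proof -
  have "\<Union>{set (pl ((s div 2) mod L)) | s. s < Suc (Suc (2 * k)) \<and> even s} = (\<Union>s\<le>k. set (pl s))"
  proof (rule set_eqI, rule iffI)
    fix x assume "x \<in> \<Union>{set (pl ((s div 2) mod L)) | s. s < Suc (Suc (2 * k)) \<and> even s}"
    then show "x \<in> (\<Union>s\<le>k. set (pl s))" using assms by (auto elim!: evenE)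
  next
    fix x assume "x \<in> (\<Union>s\<le>k. set (pl s))"
    then obtain t where "t \<le> k" "x \<in> set (pl t)" by auto
    then show "x \<in> \<Union>{set (pl ((s div 2) mod L)) | s. s < Suc (Suc (2 * k)) \<and> even s}"
      using assms by (intro UnionI[of "set (pl t)"]) (auto intro!: exI[of _ "2 * t"])
  qed
  then show ?thesis unfolding is_t1_def seen_plabel_def by auto
qed

definition pair_unseen :: "nat \<Rightarrow> nat \<Rightarrow> bool" where
  "pair_unseen m j \<longleftrightarrow> (\<forall>m'<m. nlab m' = nlab m \<longrightarrow> j \<notin> set (pt m'))"

lemma pair_unseen_if_t1:
  assumes "m < 2 * L" and "t1 (m, nlab m, j)"
  shows "pair_unseen m j"
  unfolding pair_unseen_def
proof (intro allI impI)
  fix m' assume "m' < m" and same_n: "nlab m' = nlab m"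
  show "j \<notin> set (pt m')"
  proof (cases m rule: even_odd_cases)
    case (even k)
    have "m' div 2 < k" using \<open>m' < m\<close> even by simp
    moreover have "nl (m' div 2) = nl k" using same_n even by (simp add: edge_nlab_def)
    ultimately show ?thesis using assms(2) even by (simp add: is_t1_even)
  next
    case (odd k)
    then have k: "k < L" using assms(1) by simp
    then have unseen: "\<not> seen_plabel k j" using assms(2) odd by (simp add: is_t1_odd)
    show ?thesis
    proof (cases m' rule: even_odd_cases)
      case (even s)
      then show ?thesis using unseen \<open>m' < m\<close> odd by (auto simp: seen_plabel_def)
    next
      case (odd s)
      then have "Suc s \<le> k" using \<open>m' < m\<close> \<open>m = Suc (2 * k)\<close> by simp
      then show ?thesis using unseen odd k by (auto simp: seen_plabel_def)
    qed
  qed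
qed

lemma first_occurrence_if_pair_unseen:
  assumes q: "q < length S" and Sq: "S ! q = (m, nlab m, j)" and unseen: "pair_unseen m j"
    and "i < q"
  shows "snd (S ! i) \<noteq> snd (S ! q)"
proof
  assume same: "snd (S ! i) = snd (S ! q)"
  have i: "i < length S" using \<open>i < q\<close> q by simp
  obtain m' j' where Si: "S ! i = (m', nlab m', j')" by (rule subedge_nth[OF i])
  have "m' \<le> m"
    using sorted_nth_mono[OF sorted_subedge_edges, of i q] \<open>i < q\<close> q Si Sq by simp
  moreover have "m' \<noteq> m"
    using same Si Sq nth_eq_iff_index_eq[OF distinct_subedges i q] \<open>i < q\<close> by auto
  moreover have "m' < 2 * L" "j \<in> set (pt m')"
    using subedge_nth[OF i] same Si Sq by auto
  ultimately show False using unseen same Si Sq by (auto simp: pair_unseen_def)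
qed

lemma not_t3_if_first_occurrence:
  assumes "\<forall>i<q. snd (S ! i) \<noteq> snd (S ! q)"
  shows "\<not> t3 q"
proof -
  have "snd x \<noteq> snd (S ! q)" if x: "x \<in> set (take q S)" for x
  proof -
    obtain i where "i < q" "S ! i = x"
      using x by (auto simp: in_set_conv_nth)
    then show ?thesis using assms by auto
  qed
  then have "filter (\<lambda>x. snd x = snd (S ! q)) (take q S) = []"
    by (simp add: filter_empty_conv)
  then show ?thesis unfolding is_t3_def Let_def by simp
qed

definition "t1_positions = {q. q < length S \<and> t1 (S ! q)}"
definition "t3_positions = {q. q < length S \<and> t3 q}"
definition "t4_positions = {q. q < length S \<and> \<not> t1 (S ! q) \<and> \<not> t3 q}"

lemma first_occurrence_if_t1:
  assumes "q \<in> t1_positions"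
  shows "\<forall>i<q. snd (S ! i) \<noteq> snd (S ! q)"
proof -
  have q: "q < length S" and "t1 (S ! q)" using assms by (auto simp: t1_positions_def)
  obtain m j where Sq: "S ! q = (m, nlab m, j)" and "m < 2 * L" by (rule subedge_nth[OF q])
  then have "pair_unseen m j" using \<open>t1 (S ! q)\<close> by (simp add: pair_unseen_if_t1)
  then show ?thesis using first_occurrence_if_pair_unseen[OF q Sq] by blast
qed

lemma card_t1_positions_le_t3: "card t1_positions \<le> card t3_positions"
proof -
  let ?second = "{q'. q' < length S \<and>
    (\<exists>q\<in>t1_positions. filter (\<lambda>x. snd x = snd (S ! q')) (take q' S) = [S ! q])}"
  have "card t1_positions \<le> card ?second"
    using even_count_pairs first_occurrence_if_t1
    by (intro card_first_occurrences_le) (auto simp: t1_positions_def)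
  also have "?second \<subseteq> t3_positions"
    by (auto simp: t1_positions_def t3_positions_def is_t3_def Let_def)
  then have "card ?second \<le> card t3_positions"
    by (intro card_mono) (simp_all add: t3_positions_def)
  finally show ?thesis .
qed

lemma card_t4_positions_le: "card t4_positions + 2 * card t1_positions \<le> 2 * L * d"
proof -
  have "{..<length S} = t1_positions \<union> t3_positions \<union> t4_positions"
    by (auto simp: t1_positions_def t3_positions_def t4_positions_def)
  moreover have "t1_positions \<inter> t3_positions = {}"
    using first_occurrence_if_t1 not_t3_if_first_occurrence
    by (auto simp: t1_positions_def t3_positions_def)
  moreover have "(t1_positions \<union> t3_positions) \<inter> t4_positions = {}"
    by (auto simp: t1_positions_def t3_positions_def t4_positions_def)
  ultimately have "length S = card t1_positions + card t3_positions + card t4_positions"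
    by (metis card_Un_disjoint card_lessThan finite_Un finite_lessThan)
  then show ?thesis using card_t1_positions_le_t3 length_subedges by simp
qed

lemma card_nlabels_eq_new: "card (nl ` {..<K}) = card {k. k < K \<and> new_nlabel k}"
proof (induction K)
  case (Suc K)
  have "nl K \<in> nl ` {..<K} \<longleftrightarrow> \<not> new_nlabel K"
    unfolding new_nlabel_def by (metis image_iff lessThan_iff)
  moreover have "{k. k < Suc K \<and> new_nlabel k} =
      (if new_nlabel K then insert K {k. k < K \<and> new_nlabel k} else {k. k < K \<and> new_nlabel k})"
    by (auto simp: less_Suc_eq)
  ultimately show ?case using Suc by (simp add: lessThan_Suc card_insert_if)
qed simp

lemma card_seen_plabels:
  "K < L \<Longrightarrow> card {j. seen_plabel K j} = d + (\<Sum>k<K. card {j \<in> set (pl (Suc k)). \<not> seen_plabel k j})"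
proof (induction K)
  case 0
  have "{j. seen_plabel 0 j} = set (pl 0)" by (auto simp: seen_plabel_def)
  then show ?case using length_pl[OF L_pos] distinct_pl[OF L_pos] by (simp add: distinct_card)
next
  case (Suc K)
  have eq: "{j. seen_plabel (Suc K) j} = {j. seen_plabel K j} \<union> {j \<in> set (pl (Suc K)). \<not> seen_plabel K j}"
    by (auto simp: seen_plabel_def le_Suc_eq)
  have "finite {j. seen_plabel K j}"
    by (rule finite_subset[of _ "\<Union>s\<le>K. set (pl s)"]) (auto simp: seen_plabel_def)
  then have "card ({j. seen_plabel K j} \<union> {j \<in> set (pl (Suc K)). \<not> seen_plabel K j}) =
      card {j. seen_plabel K j} + card {j \<in> set (pl (Suc K)). \<not> seen_plabel K j}"
    by (intro card_Un_disjoint) auto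
  then show ?case using Suc eq by simp
qed

lemma card_t1_positions: "card t1_positions + d = d * r_tilde L nl + c_tilde L pl"
proof -
  obtain K where L: "L = Suc K" using L_pos gr0_conv_Suc by blast
  define fresh where "fresh k = card {j \<in> set (pl (Suc k mod L)). \<not> seen_plabel k j}" for k
  have last: "fresh K = 0"
    unfolding fresh_def using L by (auto simp: seen_plabel_def)
  have "card t1_positions = card {x \<in> set S. t1 x}"
    unfolding t1_positions_def by (rule card_indices_distinct[OF distinct_subedges])
  also have "\<dots> = (\<Sum>m<2 * L. card {j \<in> set (pt m). t1 (m, nlab m, j)})"
    by (rule card_subedges_with)
  also have "\<dots> = (\<Sum>k<L. (if new_nlabel k then d else 0) + fresh k)"
    unfolding sum_lessThan_double fresh_def
    by (intro sum.cong refl) (simp add: is_t1_even is_t1_odd new_nlabel_def length_pl distinct_pl distinct_card)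
  also have "\<dots> = (\<Sum>k<L. if new_nlabel k then d else 0) + (\<Sum>k<L. fresh k)"
    by (rule sum.distrib)
  also have "(\<Sum>k<L. if new_nlabel k then d else 0) = d * card {k. k < L \<and> new_nlabel k}"
    by (simp add: sum.inter_filter[symmetric] mult.commute)
  also have "(\<Sum>k<L. fresh k) = (\<Sum>k<K. fresh k)"
    using last L by simp
  also have "(\<Sum>k<K. fresh k) = (\<Sum>k<K. card {j \<in> set (pl (Suc k)). \<not> seen_plabel k j})"
    unfolding fresh_def using L by (intro sum.cong) auto
  finally have "card t1_positions + d = d * card {k. k < L \<and> new_nlabel k} + card {j. seen_plabel K j}"
    using card_seen_plabels[of K] L by simp
  moreover have "{j. seen_plabel K j} = (\<Union>k<L. set (pl k))"
    using L by (auto simp: seen_plabel_def less_Suc_eq_le)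
  ultimately show ?thesis
    unfolding r_tilde_def c_tilde_def card_nlabels_eq_new by simp
qed

lemma exists_other_nvertex_with_nlabel:
  assumes k: "k < L"
  shows "\<exists>k'<L. k' \<noteq> k \<and> nl k' = nl k"
proof -
  obtain j where j: "(j \<in> set (pl k)) \<noteq> (j \<in> set (pl (Suc k mod L)))"
    using set_pl_neq_next[OF k] by blast
  define m0 where "m0 = (if j \<in> set (pl k) then 2 * k else Suc (2 * k))"
  have m0: "m0 < 2 * L" "j \<in> set (pt m0)" "nlab m0 = nl k"
    using k j by (auto simp: m0_def)
  obtain m where m: "m < 2 * L" "m \<noteq> m0" "nlab m = nl k" "j \<in> set (pt m)"
    using other_edge_with_pair[OF m0(1,2)] m0(3) by metis
  have "m div 2 \<noteq> k"
  proof
    assume "m div 2 = k"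
    then have "m = 2 * k \<or> m = Suc (2 * k)" by auto
    then show False using m j by (auto simp: m0_def split: if_splits)
  qed
  then show ?thesis using m by (intro exI[of _ "m div 2"]) (auto simp: edge_nlab_def)
qed

lemma two_r_tilde_le: "2 * r_tilde L nl \<le> L"
  unfolding r_tilde_def using exists_other_nvertex_with_nlabel
  by (metis card_image_le_half card_lessThan finite_lessThan lessThan_iff)

lemma exists_other_pvertex_with_plabel:
  assumes k: "k < L" and j: "j \<in> set (pl k)"
  shows "\<exists>k'<L. k' \<noteq> k \<and> j \<in> set (pl k')"
proof -
  have "2 * k < 2 * L" "j \<in> set (pt (2 * k))" using k j by simp_all
  then obtain m where m: "m < 2 * L" "m \<noteq> 2 * k" "nlab m = nl k" "j \<in> set (pt m)"
    by (metis other_edge_with_pair edge_nlab_even)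
  show ?thesis
  proof (cases m rule: even_odd_cases)
    case (even s)
    then show ?thesis using m by (intro exI[of _ s]) auto
  next
    case (odd s)
    then have s: "s < L" using m by simp
    have "Suc s mod L \<noteq> k" using nl_neq_next[OF s] m odd by auto
    then show ?thesis using m odd L_pos by (intro exI[of _ "Suc s mod L"]) auto
  qed
qed

text \<open>The pair (nl (k - 1), j) on the edge n_(k-1) -> p_k needs a partner edge, which cannot
  end at p_k or p_(k+1): their other incident n-vertices carry labels different from nl (k - 1).\<close>

lemma exists_third_pvertex_with_plabel:
  assumes k: "0 < k" "Suc k < L" and new: "new_nlabel (Suc k)"
    and j: "j \<in> set (pl k)" "j \<in> set (pl (Suc k))"
  shows "\<exists>k'<L. k' \<noteq> k \<and> k' \<noteq> Suc k \<and> j \<in> set (pl k')"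
proof -
  obtain k0 where k0: "k = Suc k0" using k by (cases k) auto
  have "Suc (2 * k0) < 2 * L" "j \<in> set (pt (Suc (2 * k0)))" using k k0 j by simp_all
  then obtain m where m: "m < 2 * L" "m \<noteq> Suc (2 * k0)" "nlab m = nl k0" "j \<in> set (pt m)"
    by (metis other_edge_with_pair edge_nlab_odd)
  have nk: "nl k \<noteq> nl k0" using nl_neq_next[of k0] k k0 by simp
  have "k0 < Suc k" using k0 by simp
  then have nk1: "nl (Suc k) \<noteq> nl k0" using new unfolding new_nlabel_def by metis
  show ?thesis
  proof (cases m rule: even_odd_cases)
    case (even s)
    then have "s \<noteq> k" "s \<noteq> Suc k" using m nk nk1 by auto
    then show ?thesis using m even by (intro exI[of _ s]) auto
  next
    case (odd s)
    then have s: "s < L" "nl s = nl k0" "s \<noteq> k0" using m by auto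
    have "Suc s mod L \<noteq> k" using Suc_mod_eq_if_pos[OF s(1)] s(3) k0 by fastforce
    moreover have "Suc s mod L \<noteq> Suc k" using Suc_mod_eq_if_pos[OF s(1)] s(2) nk by fastforce
    ultimately show ?thesis using m odd L_pos by (intro exI[of _ "Suc s mod L"]) auto
  qed
qed

definition heavy_incidences :: "(nat \<times> nat) set" where
  "heavy_incidences = {(j, k). k \<in> {..<L} \<and> j \<in> set (pl k) \<and> 3 \<le> card {k \<in> {..<L}. j \<in> set (pl k)}}"

lemma card_heavy_incidences: "card heavy_incidences + 6 * c_tilde L pl \<le> 3 * d * L"
proof -
  have "2 \<le> card {k \<in> {..<L}. j \<in> set (pl k)}" if j: "j \<in> (\<Union>k\<in>{..<L}. set (pl k))" for j
  proof -
    obtain k where k: "k < L" "j \<in> set (pl k)" using j by blast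
    then obtain k' where k': "k' < L" "k' \<noteq> k" "j \<in> set (pl k')"
      using exists_other_pvertex_with_plabel by blast
    have "card {k, k'} \<le> card {k \<in> {..<L}. j \<in> set (pl k)}"
      using k k' by (intro card_mono) auto
    then show ?thesis using k' by simp
  qed
  then have "card heavy_incidences + 6 * c_tilde L pl \<le> 3 * (\<Sum>k<L. card (set (pl k)))"
    unfolding heavy_incidences_def c_tilde_def by (intro card_heavy_incidences_le) auto
  also have "(\<Sum>k<L. card (set (pl k))) = d * L"
    by (simp add: distinct_card length_pl distinct_pl)
  finally show ?thesis by simp
qed

definition has_t4_subedge :: "nat \<Rightarrow> bool" where
  "has_t4_subedge m \<longleftrightarrow> (\<exists>q<length S. fst (S ! q) = m \<and> \<not> t1 (S ! q) \<and> \<not> t3 q)"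

definition "t4_edges = {m. m < 2 * L \<and> has_t4_subedge m}"

lemma card_t4_edges_le: "card t4_edges \<le> card t4_positions"
proof -
  have "t4_edges \<subseteq> (\<lambda>q. fst (S ! q)) ` t4_positions"
    by (auto simp: t4_edges_def has_t4_subedge_def t4_positions_def)
  then have "card t4_edges \<le> card ((\<lambda>q. fst (S ! q)) ` t4_positions)"
    by (rule card_mono[rotated]) (simp add: t4_positions_def)
  also have "\<dots> \<le> card t4_positions"
    by (rule card_image_le) (simp add: t4_positions_def)
  finally show ?thesis .
qed

lemma has_t4_subedge_if_pair_unseen:
  assumes "m < 2 * L" "j \<in> set (pt m)" "\<not> t1 (m, nlab m, j)" "pair_unseen m j"
  shows "has_t4_subedge m"
proof -
  obtain q where q: "q < length S" "S ! q = (m, nlab m, j)" by (rule subedge_index[OF assms(1,2)])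
  have "\<forall>i<q. snd (S ! i) \<noteq> snd (S ! q)"
    using first_occurrence_if_pair_unseen[OF q assms(4)] by blast
  then have "\<not> t3 q" by (rule not_t3_if_first_occurrence)
  then show ?thesis using q assms(3) unfolding has_t4_subedge_def by auto
qed

definition has_t1_subedge :: "nat \<Rightarrow> bool" where
  "has_t1_subedge m \<longleftrightarrow> (\<exists>j\<in>set (pt m). t1 (m, nlab m, j))"

definition mixed_edge :: "nat \<Rightarrow> bool" where
  "mixed_edge m \<longleftrightarrow> has_t1_subedge m \<and> (\<exists>j\<in>set (pt m). \<not> t1 (m, nlab m, j))"

lemma T4_edge_cases:
  assumes "is_T4 L nl pl m"
  shows "has_t4_subedge m \<or> mixed_edge m"
proof -
  obtain q1 where q1: "q1 < length S" "fst (S ! q1) = m" "\<not> t1 (S ! q1)"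
    using assms by (auto simp: is_T4_def is_T1_def subedge_positions_def)
  obtain q2 where q2: "q2 < length S" "fst (S ! q2) = m" "\<not> t3 q2"
    using assms by (auto simp: is_T4_def is_T3_def subedge_positions_def)
  show ?thesis
  proof (cases "t1 (S ! q2) \<and> t3 q1")
    case True
    obtain j1 where "S ! q1 = (m, nlab m, j1)" "j1 \<in> set (pt m)"
      using subedge_nth[OF q1(1)] q1(2) by (metis fst_conv)
    moreover obtain j2 where "S ! q2 = (m, nlab m, j2)" "j2 \<in> set (pt m)"
      using subedge_nth[OF q2(1)] q2(2) by (metis fst_conv)
    ultimately have "mixed_edge m"
      using True q1(3) unfolding mixed_edge_def has_t1_subedge_def by auto
    then show ?thesis ..
  next
    case False
    then show ?thesis using q1 q2 unfolding has_t4_subedge_def by blast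
  qed
qed

lemma has_t1_subedge_even:
  assumes "k < L"
  shows "has_t1_subedge (2 * k) \<longleftrightarrow> new_nlabel k"
proof -
  have "pl k \<noteq> []" using length_pl[OF assms] d_pos by auto
  then have "hd (pl k) \<in> set (pl k)" by (rule hd_in_set)
  then show ?thesis by (auto simp: has_t1_subedge_def is_t1_even new_nlabel_def)
qed

lemma has_t1_subedge_odd:
  "k < L \<Longrightarrow> has_t1_subedge (Suc (2 * k)) \<longleftrightarrow> (\<exists>j\<in>set (pl (Suc k mod L)). \<not> seen_plabel k j)"
  by (simp add: has_t1_subedge_def is_t1_odd)

lemma seen_plabel_wraparound: "Suc k = L \<Longrightarrow> j \<in> set (pl (Suc k mod L)) \<Longrightarrow> seen_plabel k j"
  by (auto simp: seen_plabel_def)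

lemma mixed_edge_odd:
  assumes "k < L"
  shows "mixed_edge (Suc (2 * k)) \<longleftrightarrow>
    Suc k < L \<and> (\<exists>x\<in>set (pl (Suc k)). \<not> seen_plabel k x) \<and> (\<exists>y\<in>set (pl (Suc k)). seen_plabel k y)"
  using assms seen_plabel_wraparound[of k]
  by (cases "Suc k < L") (auto simp: mixed_edge_def has_t1_subedge_def is_t1_odd)

lemma mixed_edge_odd_index:
  assumes "m < 2 * L" "mixed_edge m"
  obtains k where "m = Suc (2 * k)" "Suc k < L"
proof (cases m rule: even_odd_cases)
  case (even k)
  then show thesis using assms by (auto simp: mixed_edge_def has_t1_subedge_def is_t1_even)
next
  case (odd k)
  then show thesis using assms that mixed_edge_odd[of k] by simp
qed

lemma num_T4_le_t4_edges_mixed: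
  "num_T4 L nl pl \<le> card t4_edges + card {k. Suc k < L \<and> mixed_edge (Suc (2 * k))}"
proof -
  let ?M = "{k. Suc k < L \<and> mixed_edge (Suc (2 * k))}"
  have "{m. m < 2 * L \<and> is_T4 L nl pl m} \<subseteq> t4_edges \<union> (\<lambda>k. Suc (2 * k)) ` ?M"
  proof
    fix m assume "m \<in> {m. m < 2 * L \<and> is_T4 L nl pl m}"
    then have m: "m < 2 * L" "has_t4_subedge m \<or> mixed_edge m" using T4_edge_cases by auto
    show "m \<in> t4_edges \<union> (\<lambda>k. Suc (2 * k)) ` ?M"
    proof (cases "has_t4_subedge m")
      case False
      then obtain k where "m = Suc (2 * k)" "Suc k < L" using m mixed_edge_odd_index by metis
      then show ?thesis using m False by auto
    qed (use m in \<open>auto simp: t4_edges_def\<close>)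
  qed
  moreover have "finite ?M" by (rule finite_subset[of _ "{..<L}"]) auto
  ultimately have "num_T4 L nl pl \<le> card (t4_edges \<union> (\<lambda>k. Suc (2 * k)) ` ?M)"
    unfolding num_T4_def by (intro card_mono) (auto simp: t4_edges_def)
  also have "\<dots> \<le> card t4_edges + card ((\<lambda>k. Suc (2 * k)) ` ?M)" by (rule card_Un_le)
  also have "\<dots> \<le> card t4_edges + card ?M" using card_image_le \<open>finite ?M\<close> by simp
  finally show ?thesis .
qed

lemma has_t4_subedge_at_old_nvertex:
  assumes k: "Suc k < L" and x: "x \<in> set (pl (Suc k))" "\<not> seen_plabel k x"
    and old: "\<not> new_nlabel (Suc k)"
  shows "has_t4_subedge (2 * Suc k)"
proof (rule has_t4_subedge_if_pair_unseen)
  show "\<not> t1 (2 * Suc k, nlab (2 * Suc k), x)"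
    using old is_t1_even[of "Suc k"] edge_nlab_even[of "Suc k"] by (simp add: new_nlabel_def)
  show "pair_unseen (2 * Suc k) x"
    unfolding pair_unseen_def
  proof (intro allI impI)
    fix m' assume m': "m' < 2 * Suc k" and same_n: "nlab m' = nlab (2 * Suc k)"
    show "x \<notin> set (pt m')"
    proof (cases m' rule: even_odd_cases)
      case (even s)
      then show ?thesis using m' x(2) by (auto simp: seen_plabel_def)
    next
      case (odd s)
      have "nl s \<noteq> nl (Suc k)" if "s = k" using nl_neq_next[of k] k that by simp
      then have "Suc s \<le> k" using m' odd same_n edge_nlab_even[of "Suc k"] by fastforce
      then show ?thesis using odd k x(2) by (auto simp: seen_plabel_def)
    qed
  qed
qed (use k x edge_ptup_even[of "Suc k"] in auto)

lemma has_t4_subedge_at_new_nvertex: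
  assumes k: "k < L" and new: "new_nlabel k"
    and y: "y \<in> set (pl (Suc k mod L))" "y \<notin> set (pl k)" "seen_plabel k y"
  shows "has_t4_subedge (Suc (2 * k))"
proof (rule has_t4_subedge_if_pair_unseen)
  show "\<not> t1 (Suc (2 * k), nlab (Suc (2 * k)), y)"
    using k y(3) by (simp add: is_t1_odd)
  show "pair_unseen (Suc (2 * k)) y"
    unfolding pair_unseen_def
  proof (intro allI impI)
    fix m' assume m': "m' < Suc (2 * k)" and same_n: "nlab m' = nlab (Suc (2 * k))"
    then have "nl (m' div 2) = nl k" "m' div 2 \<le> k" by (simp_all add: edge_nlab_def)
    then have "m' div 2 = k"
      using new unfolding new_nlabel_def by (metis le_neq_implies_less)
    then have "m' = 2 * k" using m' by auto
    then show "y \<notin> set (pt m')" using y(2) by simp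
  qed
qed (use k y in auto)

lemma exists_plabel_not_in_prev:
  assumes k: "k < L"
  obtains y where "y \<in> set (pl (Suc k mod L))" "y \<notin> set (pl k)"
proof -
  have k': "Suc k mod L < L" using L_pos by simp
  have "card (set (pl (Suc k mod L))) = card (set (pl k))"
    using k k' by (simp add: distinct_card length_pl distinct_pl)
  then have "\<not> set (pl (Suc k mod L)) \<subseteq> set (pl k)"
    using set_pl_neq_next[OF k] by (metis card_subset_eq finite_set)
  then show thesis using that by blast
qed

text \<open>An edge is stale if it has no t1 sub-edge; the last edge n_(L-1) -> p_0 always is.\<close>

definition first_stale_edge :: "nat \<Rightarrow> nat" where
  "first_stale_edge k = (LEAST m. Suc (Suc (2 * k)) \<le> m \<and> m < 2 * L \<and> \<not> has_t1_subedge m)"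

lemma first_stale_edge:
  assumes "Suc k < L"
  shows "Suc (Suc (2 * k)) \<le> first_stale_edge k" "first_stale_edge k < 2 * L"
    "\<not> has_t1_subedge (first_stale_edge k)"
    "\<And>m. Suc (Suc (2 * k)) \<le> m \<Longrightarrow> m < first_stale_edge k \<Longrightarrow> has_t1_subedge m"
proof -
  let ?P = "\<lambda>m. Suc (Suc (2 * k)) \<le> m \<and> m < 2 * L \<and> \<not> has_t1_subedge m"
  have "?P (Suc (2 * (L - 1)))"
    using assms L_pos seen_plabel_wraparound[of "L - 1"] by (auto simp: has_t1_subedge_odd)
  then have "?P (first_stale_edge k)"
    unfolding first_stale_edge_def by (rule LeastI)
  then show "Suc (Suc (2 * k)) \<le> first_stale_edge k" "first_stale_edge k < 2 * L"
    "\<not> has_t1_subedge (first_stale_edge k)" by auto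
  fix m assume "Suc (Suc (2 * k)) \<le> m" "m < first_stale_edge k"
  then show "has_t1_subedge m"
    using not_less_Least[of m ?P] \<open>?P (first_stale_edge k)\<close> unfolding first_stale_edge_def by auto
qed

lemma has_t4_first_stale_edge:
  assumes k: "Suc k < L" and new: "new_nlabel (Suc k)"
  shows "has_t4_subedge (first_stale_edge k)"
proof -
  let ?g = "first_stale_edge k"
  note g = first_stale_edge[OF k]
  have "has_t1_subedge (2 * Suc k)" using new k has_t1_subedge_even[of "Suc k"] by simp
  then have after: "Suc (Suc (2 * k)) < ?g"
    using g(1,3) by (metis le_neq_implies_less mult_Suc_right add_2_eq_Suc)
  show ?thesis
  proof (cases ?g rule: even_odd_cases)
    case (even t)
    then obtain t0 where t0: "t = Suc t0" "Suc t0 < L" using after g(2) by (cases t) auto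
    have "has_t1_subedge (Suc (2 * t0))" using g(4) after even t0 by simp
    then obtain x where "x \<in> set (pl (Suc t0))" "\<not> seen_plabel t0 x"
      using t0 by (auto simp: has_t1_subedge_odd)
    moreover have "\<not> new_nlabel (Suc t0)" using g(3) even t0 has_t1_subedge_even[of t] by simp
    ultimately show ?thesis using has_t4_subedge_at_old_nvertex t0 even by simp
  next
    case (odd t)
    then have t: "t < L" using g(2) by simp
    have "new_nlabel t" using g(4)[of "2 * t"] after odd t by (simp add: has_t1_subedge_even)
    moreover obtain y where "y \<in> set (pl (Suc t mod L))" "y \<notin> set (pl t)"
      using exists_plabel_not_in_prev[OF t] .
    moreover have "seen_plabel t y" using g(3) odd t \<open>y \<in> set (pl (Suc t mod L))\<close>
      by (auto simp: has_t1_subedge_odd)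
    ultimately show ?thesis using has_t4_subedge_at_new_nvertex t odd by simp
  qed
qed

lemma card_mixed_old_or_unshared_le:
  "card {k. Suc k < L \<and> mixed_edge (Suc (2 * k)) \<and> (\<not> new_nlabel (Suc k) \<or>
      new_nlabel k \<and> (\<exists>y\<in>set (pl (Suc k)). seen_plabel k y \<and> y \<notin> set (pl k)))}
    \<le> card t4_edges"
  (is "card ?A \<le> _")
proof -
  define h where "h k = (if new_nlabel (Suc k) then Suc (2 * k) else 2 * Suc k)" for k
  have "inj_on h ?A" by (rule inj_onI) (auto simp: h_def split: if_splits)
  moreover have "h ` ?A \<subseteq> t4_edges"
  proof
    fix m assume "m \<in> h ` ?A"
    then obtain k where k: "k \<in> ?A" "m = h k" by blast
    then have kL: "Suc k < L" by simp
    show "m \<in> t4_edges"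
    proof (cases "new_nlabel (Suc k)")
      case False
      obtain x where "x \<in> set (pl (Suc k))" "\<not> seen_plabel k x"
        using k mixed_edge_odd[of k] by auto
      then have "has_t4_subedge (2 * Suc k)" using has_t4_subedge_at_old_nvertex kL False by blast
      then show ?thesis using k(2) kL False by (simp add: h_def t4_edges_def)
    next
      case True
      then obtain y where "new_nlabel k" "y \<in> set (pl (Suc k))" "seen_plabel k y" "y \<notin> set (pl k)"
        using k by auto
      then have "has_t4_subedge (Suc (2 * k))" using has_t4_subedge_at_new_nvertex[of k y] kL by simp
      then show ?thesis using k(2) kL True by (simp add: h_def t4_edges_def)
    qed
  qed
  ultimately show ?thesis by (rule card_inj_on_le) (simp add: t4_edges_def)
qed

lemma card_new_after_old_le:
  "card {k. Suc k < L \<and> new_nlabel (Suc k) \<and> \<not> new_nlabel k} \<le> card t4_edges"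
  (is "card ?C \<le> _")
proof -
  have mono: "first_stale_edge a < first_stale_edge b" if "a \<in> ?C" "b \<in> ?C" "a < b" for a b
  proof -
    have a: "Suc a < L" and b: "Suc b < L" "\<not> new_nlabel b" using that by auto
    have "\<not> has_t1_subedge (2 * b)" using b has_t1_subedge_even[of b] by simp
    moreover have "Suc (Suc (2 * a)) \<le> 2 * b" using \<open>a < b\<close> by simp
    ultimately have "\<not> 2 * b < first_stale_edge a" using first_stale_edge(4)[OF a] by blast
    then show ?thesis using first_stale_edge(1)[OF b(1)] by simp
  qed
  have "inj_on first_stale_edge ?C"
  proof (rule inj_onI)
    fix a b assume ab: "a \<in> ?C" "b \<in> ?C" "first_stale_edge a = first_stale_edge b"
    show "a = b"
    proof (rule linorder_cases[of a b])
      assume "a < b" then show ?thesis using mono[of a b] ab by simp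
    next
      assume "b < a" then show ?thesis using mono[of b a] ab by simp
    qed
  qed
  moreover have "first_stale_edge ` ?C \<subseteq> t4_edges"
  proof
    fix m assume "m \<in> first_stale_edge ` ?C"
    then obtain k where "k \<in> ?C" "m = first_stale_edge k" by blast
    then show "m \<in> t4_edges"
      using first_stale_edge(2)[of k] has_t4_first_stale_edge[of k] by (simp add: t4_edges_def)
  qed
  ultimately show ?thesis by (rule card_inj_on_le) (simp add: t4_edges_def)
qed

lemma card_shared_plabel_le:
  "card {k. 0 < k \<and> Suc k < L \<and> new_nlabel (Suc k) \<and> set (pl k) \<inter> set (pl (Suc k)) \<noteq> {}}
    \<le> card heavy_incidences"
  (is "card ?G \<le> _")
proof -
  have "?G \<subseteq> snd ` heavy_incidences"
  proof
    fix k assume "k \<in> ?G"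
    then obtain j where k: "0 < k" "Suc k < L" "new_nlabel (Suc k)" and
      j: "j \<in> set (pl k)" "j \<in> set (pl (Suc k))" by blast
    obtain k' where k': "k' < L" "k' \<noteq> k" "k' \<noteq> Suc k" "j \<in> set (pl k')"
      using exists_third_pvertex_with_plabel[OF k j] by blast
    have "card {k, Suc k, k'} \<le> card {k \<in> {..<L}. j \<in> set (pl k)}"
      using k k' j by (intro card_mono) auto
    then have "(j, k) \<in> heavy_incidences"
      using k' k j by (auto simp: heavy_incidences_def)
    then show "k \<in> snd ` heavy_incidences" by force
  qed
  moreover have "finite heavy_incidences"
    by (rule finite_subset[of _ "(\<Union>k<L. set (pl k)) \<times> {..<L}"]) (auto simp: heavy_incidences_def)
  ultimately have "card ?G \<le> card (snd ` heavy_incidences)"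
    by (intro card_mono) simp_all
  also have "\<dots> \<le> card heavy_incidences"
    using \<open>finite heavy_incidences\<close> by (rule card_image_le)
  finally show ?thesis .
qed

lemma card_mixed_edges_le:
  "card {k. Suc k < L \<and> mixed_edge (Suc (2 * k))} \<le> 2 * card t4_edges + 1 + card heavy_incidences"
proof -
  let ?M = "{k. Suc k < L \<and> mixed_edge (Suc (2 * k))}"
  let ?A = "{k. Suc k < L \<and> mixed_edge (Suc (2 * k)) \<and> (\<not> new_nlabel (Suc k) \<or>
      new_nlabel k \<and> (\<exists>y\<in>set (pl (Suc k)). seen_plabel k y \<and> y \<notin> set (pl k)))}"
  let ?C = "{k. Suc k < L \<and> new_nlabel (Suc k) \<and> \<not> new_nlabel k}"
  let ?G = "{k. 0 < k \<and> Suc k < L \<and> new_nlabel (Suc k) \<and> set (pl k) \<inter> set (pl (Suc k)) \<noteq> {}}"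
  have "?M \<subseteq> ?A \<union> ?C \<union> {0} \<union> ?G"
  proof
    fix k assume k: "k \<in> ?M"
    then obtain y where "y \<in> set (pl (Suc k))" "seen_plabel k y"
      using mixed_edge_odd[of k] by auto
    then show "k \<in> ?A \<union> ?C \<union> {0} \<union> ?G" using k by (cases "y \<in> set (pl k)") auto
  qed
  moreover have "finite ?A" "finite ?C" "finite ?G"
    by (auto intro: finite_subset[of _ "{..<L}"])
  ultimately have "card ?M \<le> card (?A \<union> ?C \<union> {0} \<union> ?G)"
    by (intro card_mono) simp_all
  moreover have "card (?A \<union> ?C \<union> {0} \<union> ?G) \<le> card (?A \<union> ?C \<union> {0}) + card ?G"
    "card (?A \<union> ?C \<union> {0}) \<le> card (?A \<union> ?C) + card {0 :: nat}"
    "card (?A \<union> ?C) \<le> card ?A + card ?C"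
    by (rule card_Un_le)+
  ultimately show ?thesis
    using card_mixed_old_or_unshared_le card_new_after_old_le card_shared_plabel_le by simp
qed

lemma num_T4_bound: "num_T4 L nl pl + 6 * d * r_tilde L nl + 12 * c_tilde L pl \<le> 9 * d * L + 6 * d + 1"
proof -
  have "2 * L * d = 2 * (d * L)" "3 * d * L = 3 * (d * L)" "9 * d * L = 9 * (d * L)"
    "6 * d * r_tilde L nl = 6 * (d * r_tilde L nl)" by simp_all
  then show ?thesis
    using num_T4_le_t4_edges_mixed card_mixed_edges_le card_t4_edges_le card_t4_positions_le
      card_t1_positions card_heavy_incidences
    by linarith
qed

end

theorem proposition6p3:
  fixes p n d l L :: nat and nl :: "nat \<Rightarrow> nat" and pl :: "nat \<Rightarrow> nat list"
  assumes "1 \<le> d" and "d \<le> l" and "2 \<le> L"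
    and "nb_multi_labelling p n d L nl pl"
  shows "real (num_T4 L nl pl) \<le> 12 * Delta_bar d l L nl pl * real l"
proof -
  interpret nb_labelling p n d L nl pl
    using assms by unfold_locales simp_all
  define r c where "r = real (r_tilde L nl)" and "c = real (c_tilde L pl)"
  have "real (num_T4 L nl pl + 6 * d * r_tilde L nl + 12 * c_tilde L pl) \<le> real (9 * d * L + 6 * d + 1)"
    using num_T4_bound by (simp only: of_nat_le_iff)
  then have bound: "real (num_T4 L nl pl) + 6 * real d * r + 12 * c \<le> 9 * real d * real L + 6 * real d + 1"
    unfolding r_def c_def by simp
  have "2 * r \<le> real L" using two_r_tilde_le unfolding r_def by linarith
  \<comment> \<open>the slack in the claim is 12 l - 6 d - 1 + (6 l - 3 d) (L - 2 r)\<close>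
  then have "0 \<le> (6 * real l - 3 * real d) * (real L - 2 * r)"
    using assms(2) by (intro mult_nonneg_nonneg) simp_all
  moreover have "12 * Delta_bar d l L nl pl * real l
      = 12 * real l + 6 * real L * real l + 6 * real d * real L - 12 * r * real l - 12 * c"
    using assms(1,2) unfolding Delta_bar_def r_def c_def by (simp add: field_simps)
  ultimately show ?thesis
    using bound assms(1,2) by (simp add: algebra_simps)
qed

end
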